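(* Let $\Gamma$ be the K3 lattice. Then the set of exceptional Kummer points is dense in $Q_\Gamma$.
   Context: The K3 lattice is $\Gamma=2(-E_8)\oplus 3U$, where $U$ is the hyperbolic plane. $Q_\Gamma=\{[x]\in\mathbb P(\Gamma_{\mathbb C}): x^2=0,\ (x+\bar x)^2>0\}$. Each $P\in Q_\Gamma$ is identified with the oriented positive plane $P\subset\Gamma_{\mathbb R}$ spanned by the real and imaginary parts of a representative. A point $P\in Q_\Gamma$ is called exceptional Kummer if the plane $P\subset\Gamma_{\mathbb R}$ is defined over $\mathbb Q$ (i.e. $P\cap\Gamma$ has rank $2$, equivalently $P\in Q_\Gamma\cap\mathbb P(\Gamma\otimes\mathbb Q(i))$) and $x^2\equiv 0 \pmod 4$ for all $x\in P\cap\Gamma$. *)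

theory Defs
  imports Complex_Main
begin

text \<open>Vectors of the K3 lattice and its scalar extensions are modelled as functions
  nat => 'a supported on the index set {..<22} (coordinates 0..21).
  Coordinates 0..7 and 8..15 carry the two copies of -E8, coordinates
  16..21 the three hyperbolic planes U.\<close>

definition E8_adj :: "nat \<Rightarrow> nat \<Rightarrow> bool" where
  "E8_adj i j \<longleftrightarrow> {i, j} \<in> {{0,2}, {2,3}, {3,4}, {4,5}, {5,6}, {6,7}, {1,3}}"

definition E8_gram :: "nat \<Rightarrow> nat \<Rightarrow> int" where
  "E8_gram i j = (if i = j then 2 else if E8_adj i j then -1 else 0)"

definition K3_gram :: "nat \<Rightarrow> nat \<Rightarrow> int" where
  "K3_gram i j =
    (if i < 8 \<and> j < 8 then - E8_gram i j
     else if 8 \<le> i \<and> i < 16 \<and> 8 \<le> j \<and> j < 16 then - E8_gram (i - 8) (j - 8)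
     else if 16 \<le> i \<and> i < 22 \<and> 16 \<le> j \<and> j < 22 then
       (if i \<noteq> j \<and> (i - 16) div 2 = (j - 16) div 2 then 1 else 0)
     else 0)"

text \<open>The (bilinear, not hermitian) extension of the lattice form to any commutative ring.\<close>
definition K3_form :: "(nat \<Rightarrow> 'a::comm_ring_1) \<Rightarrow> (nat \<Rightarrow> 'a) \<Rightarrow> 'a" where
  "K3_form x y = (\<Sum>i<22. \<Sum>j<22. of_int (K3_gram i j) * x i * y j)"

definition supported22 :: "(nat \<Rightarrow> 'a::zero) \<Rightarrow> bool" where
  "supported22 x \<longleftrightarrow> (\<forall>i\<ge>22. x i = 0)"

text \<open>The cone over Q_Gamma in Gamma_C: x^2 = 0 and (x + conj x)^2 > 0.\<close>
definition Q_cone :: "(nat \<Rightarrow> complex) set" where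
  "Q_cone = {x. supported22 x \<and> K3_form x x = 0 \<and>
     K3_form (\<lambda>i. Re (x i + cnj (x i))) (\<lambda>i. Re (x i + cnj (x i))) > (0::real)}"

definition plane_lattice :: "(nat \<Rightarrow> complex) \<Rightarrow> (nat \<Rightarrow> int) set" where
  "plane_lattice x = {v. supported22 v \<and>
     (\<exists>a b :: real. \<forall>i. real_of_int (v i) = a * Re (x i) + b * Im (x i))}"

definition int_lin_indep2 :: "(nat \<Rightarrow> int) \<Rightarrow> (nat \<Rightarrow> int) \<Rightarrow> bool" where
  "int_lin_indep2 u v \<longleftrightarrow> (\<forall>m n :: int. (\<forall>i. m * u i + n * v i = 0) \<longrightarrow> m = 0 \<and> n = 0)"

definition exceptional_kummer :: "(nat \<Rightarrow> complex) \<Rightarrow> bool" where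
  "exceptional_kummer x \<longleftrightarrow>
     (\<exists>u\<in>plane_lattice x. \<exists>v\<in>plane_lattice x. int_lin_indep2 u v) \<and>
     (\<forall>w\<in>plane_lattice x. (4::int) dvd K3_form w w)"

end

(*
  Write x = p + i q with p.p = q.q > 0 and p.q = 0, and approximate 2n p, 2n q by the integer
  vectors u = 2 floor(n p) + e_16 and v = 2 floor(n q) + e_18.  The basis vectors e_16 and e_18 lie
  in different copies of U, so they are isotropic and orthogonal; hence 4 divides u.u and v.v, u.v
  is even, and the minor D = u_16 v_18 - u_18 v_16 is odd.  Gram-Schmidt applied to u, v, with the
  second vector rescaled to the length of the first, gives an isotropic point close to x whose
  plane is spanned by u and v.  By Cramer's rule every lattice vector w of that plane satisfies
  D w = m u + k v, so 4 divides D^2 w.w and therefore w.w.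
*)
theory Submission
  imports Defs "HOL-Library.Indicator_Function"
begin

lemma K3_gram_sym: "K3_gram i j = K3_gram j i"
  unfolding K3_gram_def E8_gram_def E8_adj_def by (auto simp: insert_commute)

lemma K3_form_sym: "K3_form x y = K3_form y x"
  unfolding K3_form_def by (subst sum.swap) (simp add: K3_gram_sym mult_ac)

lemma K3_form_add_left: "K3_form (\<lambda>i. x i + y i) z = K3_form x z + K3_form y z"
  unfolding K3_form_def by (simp add: algebra_simps sum.distrib)

lemma K3_form_add_right: "K3_form z (\<lambda>i. x i + y i) = K3_form z x + K3_form z y"
  unfolding K3_form_def by (simp add: algebra_simps sum.distrib)

lemma K3_form_diff_right: "K3_form z (\<lambda>i. x i - y i) = K3_form z x - K3_form z y"
  unfolding K3_form_def by (simp add: algebra_simps sum_subtractf)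

lemma K3_form_scale_left: "K3_form (\<lambda>i. c * x i) z = c * K3_form x z"
  unfolding K3_form_def by (simp add: sum_distrib_left algebra_simps)

lemma K3_form_scale_right: "K3_form z (\<lambda>i. c * x i) = c * K3_form z x"
  unfolding K3_form_def by (simp add: sum_distrib_left algebra_simps)

lemma K3_form_Complex:
  "K3_form (\<lambda>i. Complex (p i) (q i)) (\<lambda>i. Complex (p i) (q i))
     = Complex (K3_form p p - K3_form q q) (2 * K3_form p q)"
proof -
  have of_real: "K3_form (\<lambda>i. complex_of_real (x i)) (\<lambda>i. of_real (y i)) = of_real (K3_form x y)"
    for x y by (simp add: K3_form_def)
  have "(\<lambda>i. Complex (p i) (q i)) = (\<lambda>i. complex_of_real (p i) + \<i> * of_real (q i))"
    by (simp add: fun_eq_iff complex_eq_iff)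
  then show ?thesis
    by (simp add: K3_form_add_left K3_form_add_right K3_form_scale_left K3_form_scale_right
        of_real K3_form_sym[of q p] complex_eq_iff)
qed

lemma K3_form_indicator:
  assumes "k < 22" "l < 22"
  shows "K3_form (indicator {k}) (indicator {l}) = (of_int (K3_gram k l) :: 'a::comm_ring_1)"
proof -
  have "(of_int (K3_gram i j) :: 'a) * indicator {k} i * indicator {l} j
     = (if i = k then (if j = l then of_int (K3_gram k l) else 0) else 0)" for i j
    by (simp add: indicator_def)
  then show ?thesis using assms by (simp add: K3_form_def sum.If_cases)
qed

lemma tendsto_K3_form:
  fixes f g :: "'b \<Rightarrow> nat \<Rightarrow> real"
  assumes "\<And>i. ((\<lambda>n. f n i) \<longlongrightarrow> a i) F" "\<And>i. ((\<lambda>n. g n i) \<longlongrightarrow> b i) F"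
  shows "((\<lambda>n. K3_form (f n) (g n)) \<longlongrightarrow> K3_form a b) F"
  unfolding K3_form_def by (intro tendsto_intros assms)

lemma K3_form_double_plus:
  "K3_form (\<lambda>i. 2 * a i + e i) (\<lambda>i. 2 * b i + f i)
     = 4 * K3_form a b + 2 * K3_form a f + 2 * K3_form e b + K3_form e f"
  by (simp add: K3_form_add_left K3_form_add_right K3_form_scale_left K3_form_scale_right)

lemma four_dvd_K3_form_double_plus:
  fixes a e :: "nat \<Rightarrow> int"
  assumes "K3_form e e = 0"
  shows "4 dvd K3_form (\<lambda>i. 2 * a i + e i) (\<lambda>i. 2 * a i + e i)"
  using assms by (simp add: K3_form_double_plus K3_form_sym[of e a])

lemma even_K3_form_double_plus:
  fixes a b e f :: "nat \<Rightarrow> int"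
  assumes "K3_form e f = 0"
  shows "even (K3_form (\<lambda>i. 2 * a i + e i) (\<lambda>i. 2 * b i + f i))"
  using assms by (simp add: K3_form_double_plus)

lemma four_dvd_K3_form_lin_comb:
  fixes u v :: "nat \<Rightarrow> int"
  assumes "4 dvd K3_form u u" "4 dvd K3_form v v" "even (K3_form u v)"
  shows "4 dvd K3_form (\<lambda>i. m * u i + k * v i) (\<lambda>i. m * u i + k * v i)"
proof -
  obtain c where "K3_form u v = 2 * c" using assms(3) by blast
  then have "K3_form (\<lambda>i. m * u i + k * v i) (\<lambda>i. m * u i + k * v i)
      = m * m * K3_form u u + 4 * (m * k * c) + k * k * K3_form v v"
    by (simp add: K3_form_add_left K3_form_add_right K3_form_scale_left K3_form_scale_right
        K3_form_sym[of v u] algebra_simps)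
  then show ?thesis using assms(1,2) by simp
qed

lemma four_dvd_K3_form_if_odd_multiple:
  fixes w :: "nat \<Rightarrow> int"
  assumes "odd d" "4 dvd K3_form (\<lambda>i. d * w i) (\<lambda>i. d * w i)"
  shows "4 dvd K3_form w w"
proof -
  have "coprime ((2::int) ^ 2) (d * d)" using assms(1)
    by (simp only: coprime_power_left_iff coprime_mult_right_iff coprime_left_2_iff_odd) simp
  then have "coprime 4 (d * d)" by simp
  moreover have "4 dvd d * d * K3_form w w"
    using assms(2) by (simp add: K3_form_scale_left K3_form_scale_right mult.assoc)
  ultimately show ?thesis by (simp add: coprime_dvd_mult_right_iff)
qed

lemma Cramer_rule_2:
  fixes u v w :: "nat \<Rightarrow> int" and a b :: real
  assumes "\<forall>l. w l = a * u l + b * v l"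
  shows "(u i * v j - u j * v i) * w l = (w i * v j - w j * v i) * u l + (u i * w j - u j * w i) * v l"
proof -
  have "real_of_int ((u i * v j - u j * v i) * w l)
      = real_of_int ((w i * v j - w j * v i) * u l + (u i * w j - u j * w i) * v l)"
    using assms by (simp add: algebra_simps)
  then show ?thesis by (rule of_int_eq_iff[THEN iffD1])
qed

lemma int_lin_indep2_if_minor_nonzero:
  assumes "u i * v j - u j * v i \<noteq> 0"
  shows "int_lin_indep2 u v"
  unfolding int_lin_indep2_def
proof (intro allI impI)
  fix m n :: int
  assume "\<forall>l. m * u l + n * v l = 0"
  then have ij: "m * u i + n * v i = 0" "m * u j + n * v j = 0" by auto
  have "m * (u i * v j - u j * v i) = (m * u i + n * v i) * v j - (m * u j + n * v j) * v i"
    and "n * (u i * v j - u j * v i) = u i * (m * u j + n * v j) - u j * (m * u i + n * v i)"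
    by algebra+
  then have "m * (u i * v j - u j * v i) = 0" "n * (u i * v j - u j * v i) = 0"
    unfolding ij by simp_all
  then show "m = 0 \<and> n = 0" using assms by simp
qed

lemma exceptional_kummer_if_plane_lattice_eq:
  fixes u v :: "nat \<Rightarrow> int"
  assumes plane: "plane_lattice x
      = {w. supported22 w \<and> (\<exists>(a::real) (b::real). \<forall>l. w l = a * u l + b * v l)}"
    and "supported22 u" "supported22 v"
    and odd: "odd (u i * v j - u j * v i)"
    and even: "4 dvd K3_form u u" "4 dvd K3_form v v" "even (K3_form u v)"
  shows "exceptional_kummer x"
proof -
  have "\<forall>l. u l = 1 * real_of_int (u l) + 0 * real_of_int (v l)"
    and "\<forall>l. v l = 0 * real_of_int (u l) + 1 * real_of_int (v l)" by simp_all
  then have "u \<in> plane_lattice x" "v \<in> plane_lattice x"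
    unfolding plane using \<open>supported22 u\<close> \<open>supported22 v\<close> by blast+
  moreover have "int_lin_indep2 u v"
    using odd by (intro int_lin_indep2_if_minor_nonzero[of u i v j]) (metis even_zero)
  moreover have "4 dvd K3_form w w" if "w \<in> plane_lattice x" for w
  proof -
    from that plane obtain a b :: real where "\<forall>l. w l = a * u l + b * v l" by auto
    then have "(\<lambda>l. (u i * v j - u j * v i) * w l)
        = (\<lambda>l. (w i * v j - w j * v i) * u l + (u i * w j - u j * w i) * v l)"
      by (intro ext Cramer_rule_2)
    with four_dvd_K3_form_lin_comb[OF even]
    have "4 dvd K3_form (\<lambda>l. (u i * v j - u j * v i) * w l) (\<lambda>l. (u i * v j - u j * v i) * w l)"
      by simp
    with odd show ?thesis by (rule four_dvd_K3_form_if_odd_multiple)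
  qed
  ultimately show ?thesis unfolding exceptional_kummer_def by blast
qed

definition K3_orth :: "(nat \<Rightarrow> real) \<Rightarrow> (nat \<Rightarrow> real) \<Rightarrow> nat \<Rightarrow> real" where
  "K3_orth p q = (\<lambda>i. q i - K3_form p q / K3_form p p * p i)"

definition isotropic_lift :: "(nat \<Rightarrow> real) \<Rightarrow> (nat \<Rightarrow> real) \<Rightarrow> nat \<Rightarrow> complex" where
  "isotropic_lift p q =
     (\<lambda>i. Complex (p i) (sqrt (K3_form p p / K3_form (K3_orth p q) (K3_orth p q)) * K3_orth p q i))"

lemma K3_form_K3_orth: "K3_form p p \<noteq> 0 \<Longrightarrow> K3_form p (K3_orth p q) = 0"
  unfolding K3_orth_def K3_form_diff_right K3_form_scale_right by simp

lemma K3_orth_eq_self: "K3_form p q = 0 \<Longrightarrow> K3_orth p q = q"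
  by (simp add: K3_orth_def)

lemma isotropic_lift_in_Q_cone:
  assumes "supported22 p" "supported22 q"
    and pos: "K3_form p p > 0" "K3_form (K3_orth p q) (K3_orth p q) > 0"
  shows "isotropic_lift p q \<in> Q_cone"
proof -
  define r where "r = K3_orth p q"
  define \<mu> where "\<mu> = sqrt (K3_form p p / K3_form r r)"
  have "\<mu> * \<mu> = K3_form p p / K3_form r r"
    using pos by (simp add: \<mu>_def r_def)
  then have "\<mu> * (\<mu> * K3_form r r) = K3_form p p"
    using pos by (simp add: r_def flip: mult.assoc)
  moreover have "K3_form p r = 0"
    using pos by (simp add: r_def K3_form_K3_orth)
  ultimately have "K3_form (isotropic_lift p q) (isotropic_lift p q) = 0"
    by (simp add: isotropic_lift_def flip: r_def \<mu>_def)
       (simp add: K3_form_Complex K3_form_scale_left K3_form_scale_right complex_eq_iff)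
  moreover have "supported22 (isotropic_lift p q)"
    using assms(1,2) by (simp add: supported22_def isotropic_lift_def K3_orth_def complex_eq_iff)
  moreover have "(\<lambda>i. Re (isotropic_lift p q i)) = p"
    by (simp add: isotropic_lift_def)
  ultimately show ?thesis
    using pos by (simp add: Q_cone_def K3_form_scale_left K3_form_scale_right)
qed

lemma plane_lattice_isotropic_lift:
  assumes pos: "K3_form p p > 0" "K3_form (K3_orth p q) (K3_orth p q) > 0"
  shows "plane_lattice (isotropic_lift p q)
      = {w. supported22 w \<and> (\<exists>(a::real) (b::real). \<forall>i. w i = a * p i + b * q i)}"
proof -
  define c where "c = K3_form p q / K3_form p p"
  define \<mu> where "\<mu> = sqrt (K3_form p p / K3_form (K3_orth p q) (K3_orth p q))"
  have "\<mu> > 0" using pos by (simp add: \<mu>_def)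
  have Re: "Re (isotropic_lift p q i) = p i" and Im: "Im (isotropic_lift p q i) = \<mu> * (q i - c * p i)" for i
    by (simp_all add: isotropic_lift_def K3_orth_def c_def \<mu>_def)
  have "(\<exists>a b. \<forall>i. w i = a * p i + b * (\<mu> * (q i - c * p i)))
      \<longleftrightarrow> (\<exists>a b. \<forall>i. w i = a * p i + b * q i)" for w :: "nat \<Rightarrow> real"
  proof
    assume "\<exists>a b. \<forall>i. w i = a * p i + b * (\<mu> * (q i - c * p i))"
    then obtain a b where "\<forall>i. w i = a * p i + b * (\<mu> * (q i - c * p i))" by blast
    then have "\<forall>i. w i = (a - b * \<mu> * c) * p i + (b * \<mu>) * q i"
      by (simp add: algebra_simps)
    then show "\<exists>a b. \<forall>i. w i = a * p i + b * q i" by blast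
  next
    assume "\<exists>a b. \<forall>i. w i = a * p i + b * q i"
    then obtain a b where "\<forall>i. w i = a * p i + b * q i" by blast
    then have "\<forall>i. w i = (a + b * c) * p i + (b / \<mu>) * (\<mu> * (q i - c * p i))"
      using \<open>\<mu> > 0\<close> by (simp add: algebra_simps)
    then show "\<exists>a b. \<forall>i. w i = a * p i + b * (\<mu> * (q i - c * p i))" by blast
  qed
  then show ?thesis by (simp add: plane_lattice_def Re Im)
qed

lemma tendsto_K3_orth:
  fixes P Q :: "'b \<Rightarrow> nat \<Rightarrow> real"
  assumes "\<And>i. ((\<lambda>n. P n i) \<longlongrightarrow> p i) F" "\<And>i. ((\<lambda>n. Q n i) \<longlongrightarrow> q i) F"
    and "K3_form p p \<noteq> 0"
  shows "((\<lambda>n. K3_orth (P n) (Q n) i) \<longlongrightarrow> K3_orth p q i) F"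
  unfolding K3_orth_def using assms by (intro tendsto_intros tendsto_K3_form)

lemma
  fixes P Q :: "'b \<Rightarrow> nat \<Rightarrow> real"
  assumes P: "\<And>i. ((\<lambda>n. P n i) \<longlongrightarrow> p i) F" and Q: "\<And>i. ((\<lambda>n. Q n i) \<longlongrightarrow> q i) F"
    and pos: "K3_form p p > 0" and isotropic: "K3_form q q = K3_form p p" "K3_form p q = 0"
  shows tendsto_isotropic_lift:
      "((\<lambda>n. isotropic_lift (P n) (Q n) i) \<longlongrightarrow> Complex (p i) (q i)) F"
    and eventually_isotropic_lift_pos:
      "\<forall>\<^sub>F n in F. K3_form (P n) (P n) > 0 \<and> K3_form (K3_orth (P n) (Q n)) (K3_orth (P n) (Q n)) > 0"
proof -
  have "((\<lambda>n. K3_orth (P n) (Q n) i) \<longlongrightarrow> K3_orth p q i) F" for i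
    using P Q pos by (intro tendsto_K3_orth) auto
  then have R: "((\<lambda>n. K3_orth (P n) (Q n) i) \<longlongrightarrow> q i) F" for i
    using isotropic by (simp add: K3_orth_eq_self)
  have PP: "((\<lambda>n. K3_form (P n) (P n)) \<longlongrightarrow> K3_form p p) F"
    using P by (intro tendsto_K3_form)
  have "((\<lambda>n. K3_form (K3_orth (P n) (Q n)) (K3_orth (P n) (Q n))) \<longlongrightarrow> K3_form q q) F"
    using R by (intro tendsto_K3_form)
  then have RR: "((\<lambda>n. K3_form (K3_orth (P n) (Q n)) (K3_orth (P n) (Q n))) \<longlongrightarrow> K3_form p p) F"
    using isotropic by simp
  have "((\<lambda>n. sqrt (K3_form (P n) (P n) / K3_form (K3_orth (P n) (Q n)) (K3_orth (P n) (Q n))))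
      \<longlongrightarrow> 1) F"
    using tendsto_real_sqrt[OF tendsto_divide[OF PP RR]] pos by simp
  then have "((\<lambda>n. isotropic_lift (P n) (Q n) i) \<longlongrightarrow> Complex (p i) (1 * q i)) F"
    unfolding isotropic_lift_def by (intro tendsto_Complex tendsto_mult P R)
  then show "((\<lambda>n. isotropic_lift (P n) (Q n) i) \<longlongrightarrow> Complex (p i) (q i)) F"
    by simp
  show "\<forall>\<^sub>F n in F. K3_form (P n) (P n) > 0 \<and> K3_form (K3_orth (P n) (Q n)) (K3_orth (P n) (Q n)) > 0"
    using order_tendstoD(1)[OF PP pos] order_tendstoD(1)[OF RR pos] by (rule eventually_conj)
qed

definition lattice_approx :: "nat \<Rightarrow> nat \<Rightarrow> (nat \<Rightarrow> real) \<Rightarrow> nat \<Rightarrow> int" where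
  "lattice_approx k n p = (\<lambda>i. 2 * \<lfloor>real n * p i\<rfloor> + indicator {k} i)"

lemma LIMSEQ_floor_mult_div: "(\<lambda>n. real_of_int \<lfloor>real n * c\<rfloor> / real n) \<longlonglongrightarrow> c"
proof (rule tendsto_sandwich)
  show "\<forall>\<^sub>F n in sequentially. c - 1 / real n \<le> real_of_int \<lfloor>real n * c\<rfloor> / real n"
    using eventually_gt_at_top[of "0::nat"]
  proof eventually_elim
    case (elim n)
    then have "(real n * c - 1) / real n \<le> real_of_int \<lfloor>real n * c\<rfloor> / real n"
      by (intro divide_right_mono) linarith+
    then show ?case using elim by (simp add: field_simps)
  qed
  show "\<forall>\<^sub>F n in sequentially. real_of_int \<lfloor>real n * c\<rfloor> / real n \<le> c"
    using eventually_gt_at_top[of "0::nat"]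
  proof eventually_elim
    case (elim n)
    then have "real_of_int \<lfloor>real n * c\<rfloor> / real n \<le> (real n * c) / real n"
      by (intro divide_right_mono) linarith+
    then show ?case using elim by simp
  qed
  show "(\<lambda>n. c - 1 / real n) \<longlonglongrightarrow> c"
    using tendsto_diff[OF tendsto_const lim_const_over_n[of 1]] by simp
qed simp

lemma LIMSEQ_lattice_approx:
  "(\<lambda>n. real_of_int (lattice_approx k n p i) / (2 * real n)) \<longlonglongrightarrow> p i"
proof -
  have "real_of_int (lattice_approx k n p i) / (2 * real n)
      = real_of_int \<lfloor>real n * p i\<rfloor> / real n + (indicator {k} i / 2) / real n" for n
    by (simp add: lattice_approx_def add_divide_distrib indicator_def)
  then show ?thesis
    using tendsto_add[OF LIMSEQ_floor_mult_div lim_const_over_n[of "indicator {k} i / 2"]] by simp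
qed

lemma supported22_lattice_approx: "supported22 p \<Longrightarrow> k < 22 \<Longrightarrow> supported22 (lattice_approx k n p)"
  by (simp add: supported22_def lattice_approx_def)

lemma four_dvd_K3_form_lattice_approx:
  assumes "k < 22" "K3_gram k k = 0"
  shows "4 dvd K3_form (lattice_approx k n p) (lattice_approx k n p)"
  using assms unfolding lattice_approx_def
  by (intro four_dvd_K3_form_double_plus) (simp add: K3_form_indicator)

lemma even_K3_form_lattice_approx:
  assumes "k < 22" "l < 22" "K3_gram k l = 0"
  shows "even (K3_form (lattice_approx k n p) (lattice_approx l m q))"
  using assms unfolding lattice_approx_def
  by (intro even_K3_form_double_plus) (simp add: K3_form_indicator)

lemma isotropic_lift_lattice_approx:
  fixes p q :: "nat \<Rightarrow> real" and n :: nat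
  defines "u \<equiv> lattice_approx 16 n p" and "v \<equiv> lattice_approx 18 n q"
  defines "P \<equiv> \<lambda>i. real_of_int (u i) / (2 * real n)" and "Q \<equiv> \<lambda>i. real_of_int (v i) / (2 * real n)"
  assumes "n > 0" "supported22 p" "supported22 q"
    and pos: "K3_form P P > 0" "K3_form (K3_orth P Q) (K3_orth P Q) > 0"
  shows "isotropic_lift P Q \<in> Q_cone" and "exceptional_kummer (isotropic_lift P Q)"
proof -
  have "supported22 u" "supported22 v"
    using assms(6,7) by (simp_all add: u_def v_def supported22_lattice_approx)
  then show "isotropic_lift P Q \<in> Q_cone"
    using pos by (intro isotropic_lift_in_Q_cone) (simp_all add: supported22_def P_def Q_def)
  have "(\<exists>a b. \<forall>i. w i = a * P i + b * Q i) \<longleftrightarrow> (\<exists>(a::real) (b::real). \<forall>i. w i = a * u i + b * v i)"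
    for w :: "nat \<Rightarrow> real"
  proof
    assume "\<exists>a b. \<forall>i. w i = a * P i + b * Q i"
    then obtain a b where "\<forall>i. w i = a * P i + b * Q i" by blast
    then show "\<exists>(a::real) (b::real). \<forall>i. w i = a * u i + b * v i"
      by (intro exI[of _ "a / (2 * real n)"] exI[of _ "b / (2 * real n)"]) (simp add: P_def Q_def)
  next
    assume "\<exists>(a::real) (b::real). \<forall>i. w i = a * u i + b * v i"
    then obtain a b :: real where "\<forall>i. w i = a * u i + b * v i" by blast
    then show "\<exists>a b. \<forall>i. w i = a * P i + b * Q i"
      using \<open>n > 0\<close>
      by (intro exI[of _ "a * (2 * real n)"] exI[of _ "b * (2 * real n)"]) (simp add: P_def Q_def)
  qed
  then have plane: "plane_lattice (isotropic_lift P Q)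
      = {w. supported22 w \<and> (\<exists>(a::real) (b::real). \<forall>l. w l = a * u l + b * v l)}"
    using pos by (simp add: plane_lattice_isotropic_lift)
  have odd: "odd (u 16 * v 18 - u 18 * v 16)"
    by (simp add: u_def v_def lattice_approx_def)
  have even: "4 dvd K3_form u u" "4 dvd K3_form v v" "even (K3_form u v)"
    by (simp_all add: u_def v_def four_dvd_K3_form_lattice_approx even_K3_form_lattice_approx K3_gram_def)
  show "exceptional_kummer (isotropic_lift P Q)"
    using plane \<open>supported22 u\<close> \<open>supported22 v\<close> odd even
    by (rule exceptional_kummer_if_plane_lattice_eq)
qed

lemma Q_cone_Re_Im:
  assumes "x \<in> Q_cone"
  defines "p \<equiv> \<lambda>i. Re (x i)" and "q \<equiv> \<lambda>i. Im (x i)"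
  shows "supported22 p" "supported22 q" "K3_form p p > 0" "K3_form q q = K3_form p p" "K3_form p q = 0"
proof -
  have "x = (\<lambda>i. Complex (p i) (q i))" by (simp add: p_def q_def)
  then have "Complex (K3_form p p - K3_form q q) (2 * K3_form p q) = 0"
    using assms(1) by (simp add: Q_cone_def flip: K3_form_Complex)
  then show "K3_form q q = K3_form p p" "K3_form p q = 0"
    by (simp_all add: complex_eq_iff)
  show "K3_form p p > 0"
    using assms(1) by (simp add: Q_cone_def K3_form_scale_left K3_form_scale_right p_def)
  show "supported22 p" "supported22 q"
    using assms(1) by (simp_all add: Q_cone_def supported22_def p_def q_def)
qed

theorem mainTheorem8:
  "\<forall>x\<in>Q_cone. \<forall>\<epsilon>>0. \<exists>y\<in>Q_cone. exceptional_kummer y \<and>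
      (\<forall>i<22. cmod (y i - x i) < \<epsilon>)"
proof (intro ballI allI impI)
  fix x :: "nat \<Rightarrow> complex" and \<epsilon> :: real
  assume x: "x \<in> Q_cone" and "\<epsilon> > 0"
  define p q where "p = (\<lambda>i. Re (x i))" and "q = (\<lambda>i. Im (x i))"
  note cone = Q_cone_Re_Im[OF x, folded p_def q_def]
  define P Q where "P = (\<lambda>n i. real_of_int (lattice_approx 16 n p i) / (2 * real n))"
    and "Q = (\<lambda>n i. real_of_int (lattice_approx 18 n q i) / (2 * real n))"
  have P: "(\<lambda>n. P n i) \<longlonglongrightarrow> p i" and Q: "(\<lambda>n. Q n i) \<longlonglongrightarrow> q i" for i
    by (simp_all add: P_def Q_def LIMSEQ_lattice_approx)
  have "(\<lambda>n. isotropic_lift (P n) (Q n) i) \<longlonglongrightarrow> x i" for i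
    using tendsto_isotropic_lift[OF P Q cone(3-5)] by (simp add: p_def q_def)
  then have "\<forall>\<^sub>F n in sequentially. \<forall>i\<in>{..<22}. cmod (isotropic_lift (P n) (Q n) i - x i) < \<epsilon>"
    using \<open>\<epsilon> > 0\<close> by (intro eventually_ball_finite) (auto simp: tendsto_iff dist_norm)
  moreover note eventually_isotropic_lift_pos[OF P Q cone(3-5)] eventually_gt_at_top[of 0]
  ultimately have "\<forall>\<^sub>F n in sequentially.
      (\<forall>i\<in>{..<22}. cmod (isotropic_lift (P n) (Q n) i - x i) < \<epsilon>) \<and>
      (K3_form (P n) (P n) > 0 \<and> K3_form (K3_orth (P n) (Q n)) (K3_orth (P n) (Q n)) > 0) \<and> n > 0"
    by (simp add: eventually_conj_iff)
  then obtain n where "\<forall>i\<in>{..<22}. cmod (isotropic_lift (P n) (Q n) i - x i) < \<epsilon>"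
    "K3_form (P n) (P n) > 0" "K3_form (K3_orth (P n) (Q n)) (K3_orth (P n) (Q n)) > 0" "n > 0"
    using eventually_happens'[OF sequentially_bot] by blast
  then show "\<exists>y\<in>Q_cone. exceptional_kummer y \<and> (\<forall>i<22. cmod (y i - x i) < \<epsilon>)"
    using isotropic_lift_lattice_approx[of n p q] cone(1,2) unfolding P_def Q_def by auto
qed

end
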